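(* Let $t \in \mathbb{N}$. For a PLD realization $L$, define the random variables \[ \psi^{\mathrm{rem}}_{t}(L) \coloneqq \ln\!\left(\frac{1}{t}\Big(e^{L} + \sum_{i \in [t-1]} e^{-\widetilde{L}_{i}}\Big)\right), \qquad \psi^{\mathrm{add}}_{t}(L) \coloneqq -\ln\!\left(\frac{1}{t} \sum_{i \in [t]} e^{-L_{i}}\right), \] where $L, L_1, \ldots, L_t$ are independent copies of $L$, and $\widetilde{L}_1, \ldots, \widetilde{L}_{t-1}$ are independent copies of the PLD dual $\widetilde{L}$ of $L$ (independent of $L$). Then for any two distributions $P, Q$ on a common domain $\Omega$, $\mathcal{L}_{\bar{P}_{t}/Q^{t}}$ is distributed as $\psi^{\mathrm{rem}}_{t}(\mathcal{L}_{P/Q})$ and $\mathcal{L}_{Q^{t}/\bar{P}_{t}}$ is distributed as $\psi^{\mathrm{add}}_{t}(\mathcal{L}_{Q/P})$.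
   Context: Privacy loss random variable: for distributions $P,Q$ on $\Omega$, $\mathcal{L}_{P/Q}$ is the random variable $\ln\big(P(\omega)/Q(\omega)\big)$ with $\omega \sim P$ (values in $[-\infty,\infty]$). A discrete random variable $L$ on $[-\infty,\infty]$ with PMF $f_L$ is a PLD realization if $\mathbb{E}[e^{-L}] \le 1$ and $f_L(-\infty)=0$; its PLD dual $\widetilde{L}$ has PMF $f_{\widetilde{L}}(l) = f_L(-l) e^{l}$ for finite $l$ and an atom at $+\infty$ of mass $1 - \mathbb{E}[e^{-L}]$. $Q^{t}$ denotes the product distribution of $t$ independent draws from $Q$ on $\Omega^t$, and $\bar{P}_{t} \coloneqq \frac{1}{t}\sum_{i \in [t]} Q^{i-1} \times P \times Q^{t-i}$ (the output distribution of random allocation of one element to one of $t$ steps). *)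

theory Defs
  imports "HOL-Probability.Probability"
begin

fun eexp :: "ereal \<Rightarrow> ennreal" where
  "eexp (ereal x) = ennreal (exp x)"
| "eexp PInfty = \<infinity>"
| "eexp MInfty = 0"

definition eln :: "ennreal \<Rightarrow> ereal" where
  "eln x = (if x = 0 then -\<infinity> else if x = \<infinity> then \<infinity> else ereal (ln (enn2real x)))"

definition privacy_loss :: "'a pmf \<Rightarrow> 'a pmf \<Rightarrow> ereal pmf" where
  "privacy_loss P Q = map_pmf
     (\<lambda>\<omega>. if pmf Q \<omega> = 0 then \<infinity> else ereal (ln (pmf P \<omega> / pmf Q \<omega>))) P"

definition exp_neg_moment :: "ereal pmf \<Rightarrow> ennreal" where
  "exp_neg_moment L = (\<integral>\<^sup>+ x. eexp (- x) \<partial>measure_pmf L)"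

definition pld_realization :: "ereal pmf \<Rightarrow> bool" where
  "pld_realization L \<longleftrightarrow> exp_neg_moment L \<le> 1 \<and> pmf L (-\<infinity>) = 0"

definition pld_dual :: "ereal pmf \<Rightarrow> ereal pmf" where
  "pld_dual L = embed_pmf (\<lambda>y. case y of
       ereal l \<Rightarrow> pmf L (ereal (- l)) * exp l
     | PInfty \<Rightarrow> 1 - enn2real (exp_neg_moment L)
     | MInfty \<Rightarrow> 0)"

text \<open>Q^t on \<Omega>^t, with \<Omega>^t represented as functions on {0..<t} (0-indexed).\<close>
definition prod_pmf :: "nat \<Rightarrow> 'a pmf \<Rightarrow> (nat \<Rightarrow> 'a) pmf" where
  "prod_pmf t Q = Pi_pmf {..<t} undefined (\<lambda>_. Q)"

text \<open>\<bar>P_t = (1/t) \<Sum>_i Q^{i-1} \<times> P \<times> Q^{t-i}: uniform mixture over the position i.\<close>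
definition alloc_pmf :: "nat \<Rightarrow> 'a pmf \<Rightarrow> 'a pmf \<Rightarrow> (nat \<Rightarrow> 'a) pmf" where
  "alloc_pmf t P Q = pmf_of_set {..<t} \<bind>
     (\<lambda>i. Pi_pmf {..<t} undefined (\<lambda>j. if j = i then P else Q))"

definition psi_rem :: "nat \<Rightarrow> ereal pmf \<Rightarrow> ereal pmf" where
  "psi_rem t L = map_pmf
     (\<lambda>(x, ys). eln (ennreal (1 / real t) * (eexp x + (\<Sum>i<t - 1. eexp (- ys i)))))
     (pair_pmf L (prod_pmf (t - 1) (pld_dual L)))"

definition psi_add :: "nat \<Rightarrow> ereal pmf \<Rightarrow> ereal pmf" where
  "psi_add t L = map_pmf
     (\<lambda>xs. - eln (ennreal (1 / real t) * (\<Sum>i<t. eexp (- xs i))))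
     (prod_pmf t L)"

end

theory Submission
  imports Defs
begin

text \<open>Let \<rho> = P/Q \<in> [0,\<infinity>] be the likelihood ratio (\<rho> = \<infinity> off the support of Q).
  Then e^L for L = L_{P/Q} is distributed as \<rho>(X) with X ~ P, and the PLD dual of L_{P/Q} is
  L_{Q/P}, so e^{-L~} is distributed as \<rho>(Y) with Y ~ Q. On the other side, the likelihood ratio
  of \<bar>P_t against Q^t at \<omega> is the average of the \<rho>(\<omega>_j). Under Q^t all coordinates are iid ~ Q;
  under the i-th component of the mixture \<bar>P_t coordinate i is ~ P and the other t-1 are iid ~ Q,
  and since only the sum of the \<rho>(\<omega>_j) matters, every component gives the same law. Both privacy
  losses are therefore (minus) the logarithm of such an average.\<close>

lemma eexp_infinity [simp]: "eexp \<infinity> = \<infinity>" and eexp_minus_infinity [simp]: "eexp (- \<infinity>) = 0"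
  by (simp_all flip: PInfty_eq_infinity MInfty_eq_minfinity)

lemma eln_eexp [simp]: "eln (eexp y) = y"
  by (cases y) (simp_all add: eln_def)

lemma eexp_eln [simp]: "eexp (eln x) = x"
proof (cases x rule: ennreal_cases)
  case (real r)
  then show ?thesis by (cases "r = 0") (auto simp: eln_def)
qed (simp add: eln_def)

lemma eln_eq_iff: "eln x = y \<longleftrightarrow> x = eexp y"
  by (metis eexp_eln eln_eexp)

lemma eexp_uminus: "eexp (- y) = inverse (eexp y)"
  by (cases y) (simp_all add: exp_minus inverse_ennreal)

lemma eln_inverse: "eln (inverse x) = - eln x"
  by (metis eexp_eln eexp_uminus eln_eexp)

definition likelihood_ratio :: "'a pmf \<Rightarrow> 'a pmf \<Rightarrow> 'a \<Rightarrow> ennreal" where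
  "likelihood_ratio P Q x = (if pmf Q x = 0 then \<infinity> else ennreal (pmf P x / pmf Q x))"

lemma likelihood_ratio_swap:
  assumes "pmf P x \<noteq> 0 \<or> pmf Q x \<noteq> 0"
  shows "likelihood_ratio Q P x = inverse (likelihood_ratio P Q x)"
  using assms pmf_nonneg[of P x] pmf_nonneg[of Q x]
  by (auto simp: likelihood_ratio_def inverse_ennreal)

lemma privacy_loss_conv_likelihood_ratio:
  "privacy_loss P Q = map_pmf (\<lambda>x. eln (likelihood_ratio P Q x)) P"
  unfolding privacy_loss_def
proof (rule map_pmf_cong[OF refl])
  fix x assume "x \<in> set_pmf P"
  then have "pmf P x > 0" by (rule pmf_positive)
  then show "(if pmf Q x = 0 then \<infinity> else ereal (ln (pmf P x / pmf Q x)))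
      = eln (likelihood_ratio P Q x)"
    using pmf_nonneg[of Q x] by (simp add: likelihood_ratio_def eln_def)
qed

lemma privacy_loss_swap_conv_likelihood_ratio:
  "privacy_loss Q P = map_pmf (\<lambda>x. - eln (likelihood_ratio P Q x)) Q"
  unfolding privacy_loss_conv_likelihood_ratio
  by (rule map_pmf_cong)
     (simp_all add: likelihood_ratio_swap[where P = P and Q = Q] set_pmf_iff eln_inverse)

lemma pmf_privacy_loss:
  "pmf (privacy_loss P Q) y = measure P {x. likelihood_ratio P Q x = eexp y}"
  by (simp add: privacy_loss_conv_likelihood_ratio pmf_map vimage_def eln_eq_iff)

lemma pmf_privacy_loss_swap:
  "pmf (privacy_loss Q P) y = measure Q {x. likelihood_ratio P Q x = eexp (- y)}"
  by (simp add: privacy_loss_swap_conv_likelihood_ratio pmf_map vimage_def eln_eq_iff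
      ereal_uminus_eq_reorder)

lemma nn_integral_likelihood_ratio:
  assumes "S \<subseteq> {x. pmf Q x \<noteq> 0}"
  shows "(\<integral>\<^sup>+x\<in>S. likelihood_ratio P Q x \<partial>Q) = emeasure P S"
proof -
  have "(\<integral>\<^sup>+x\<in>S. likelihood_ratio P Q x \<partial>Q)
      = (\<integral>\<^sup>+x. ennreal (pmf P x) * indicator S x \<partial>count_space UNIV)"
    unfolding nn_integral_measure_pmf
    using assms pmf_nonneg[of Q]
    by (intro nn_integral_cong)
       (auto simp: likelihood_ratio_def indicator_def ennreal_mult[symmetric])
  also have "\<dots> = emeasure P S"
    by (simp add: nn_integral_measure_pmf[symmetric])
  finally show ?thesis .
qed

lemma exp_neg_moment_privacy_loss:
  "exp_neg_moment (privacy_loss P Q) = emeasure Q {x. pmf P x \<noteq> 0}"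
proof -
  have "exp_neg_moment (privacy_loss P Q) = (\<integral>\<^sup>+x. inverse (likelihood_ratio P Q x) \<partial>P)"
    by (simp add: exp_neg_moment_def privacy_loss_conv_likelihood_ratio eexp_uminus)
  also have "\<dots> = (\<integral>\<^sup>+x\<in>{x. pmf P x \<noteq> 0}. likelihood_ratio Q P x \<partial>P)"
    by (intro nn_integral_cong_AE AE_pmfI)
       (simp add: likelihood_ratio_swap[where P = P and Q = Q] set_pmf_iff)
  also have "\<dots> = emeasure Q {x. pmf P x \<noteq> 0}"
    by (rule nn_integral_likelihood_ratio) simp
  finally show ?thesis .
qed

lemma measure_likelihood_ratio_eq:
  fixes P Q :: "'a pmf"
  assumes "c \<ge> 0"
  shows "measure P {x. likelihood_ratio P Q x = ennreal c}
       = c * measure Q {x. likelihood_ratio P Q x = ennreal c}"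
proof -
  define S where "S = {x. likelihood_ratio P Q x = ennreal c}"
  have "emeasure P S = (\<integral>\<^sup>+x\<in>S. likelihood_ratio P Q x \<partial>Q)"
    by (rule nn_integral_likelihood_ratio[symmetric]) (auto simp: S_def likelihood_ratio_def)
  also have "\<dots> = (\<integral>\<^sup>+x\<in>S. ennreal c \<partial>Q)"
    by (intro nn_integral_cong) (simp add: S_def indicator_def)
  also have "\<dots> = ennreal (c * measure Q S)"
    using assms by (simp add: nn_integral_cmult_indicator measure_pmf.emeasure_eq_measure ennreal_mult)
  finally show ?thesis
    using assms by (simp add: S_def measure_pmf.emeasure_eq_measure)
qed

lemma pld_dual_privacy_loss: "pld_dual (privacy_loss P Q) = privacy_loss Q P"
proof -
  have finite: "pmf (privacy_loss P Q) (ereal (- l)) * exp l = pmf (privacy_loss Q P) (ereal l)" for l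
    unfolding pmf_privacy_loss[of P Q] pmf_privacy_loss_swap[where P = P]
    using measure_likelihood_ratio_eq[of "exp (- l)" P Q] by (simp add: exp_minus)
  have "{x. likelihood_ratio P Q x = 0} \<inter> set_pmf Q = {x. pmf P x = 0} \<inter> set_pmf Q"
    by (auto simp: likelihood_ratio_def set_pmf_iff)
  then have "measure Q {x. likelihood_ratio P Q x = 0} = measure Q {x. pmf P x = 0}"
    by (metis measure_Int_set_pmf)
  also have "\<dots> = 1 - measure Q {x. pmf P x \<noteq> 0}"
    using measure_pmf.prob_compl[of "{x. pmf P x \<noteq> 0}" Q] by (simp add: set_diff_eq)
  also have "\<dots> = 1 - enn2real (exp_neg_moment (privacy_loss P Q))"
    by (simp add: exp_neg_moment_privacy_loss measure_pmf.emeasure_eq_measure)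
  finally have infinite: "1 - enn2real (exp_neg_moment (privacy_loss P Q)) = pmf (privacy_loss Q P) \<infinity>"
    by (simp add: pmf_privacy_loss_swap[where P = P])
  have "{x. likelihood_ratio P Q x = \<infinity>} \<inter> set_pmf Q = {}"
    by (auto simp: likelihood_ratio_def set_pmf_iff)
  then have minus_infinite: "pmf (privacy_loss Q P) (- \<infinity>) = 0"
    unfolding pmf_privacy_loss_swap[where P = P] by (simp flip: measure_Int_set_pmf)
  have "(\<lambda>y. case y of ereal l \<Rightarrow> pmf (privacy_loss P Q) (ereal (- l)) * exp l
          | PInfty \<Rightarrow> 1 - enn2real (exp_neg_moment (privacy_loss P Q)) | MInfty \<Rightarrow> 0)
      = pmf (privacy_loss Q P)"
  proof
    fix y show "(case y of ereal l \<Rightarrow> pmf (privacy_loss P Q) (ereal (- l)) * exp l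
          | PInfty \<Rightarrow> 1 - enn2real (exp_neg_moment (privacy_loss P Q)) | MInfty \<Rightarrow> 0)
        = pmf (privacy_loss Q P) y"
      by (cases y) (simp_all add: finite infinite minus_infinite)
  qed
  then show ?thesis
    unfolding pld_dual_def by (simp add: type_definition.Rep_inverse[OF td_pmf_embed_pmf])
qed

fun iid_sum_pmf :: "'b::comm_monoid_add pmf \<Rightarrow> nat \<Rightarrow> 'b pmf" where
  "iid_sum_pmf R 0 = return_pmf 0"
| "iid_sum_pmf R (Suc n) = map_pmf (\<lambda>(x, s). x + s) (pair_pmf R (iid_sum_pmf R n))"

lemma map_sum_Pi_pmf_insert:
  assumes "finite B" "i \<notin> B"
  shows "map_pmf (\<lambda>f. \<Sum>j\<in>insert i B. g (f j)) (Pi_pmf (insert i B) d p)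
       = map_pmf (\<lambda>(u, s). u + s)
           (pair_pmf (map_pmf g (p i)) (map_pmf (\<lambda>f. \<Sum>j\<in>B. g (f j)) (Pi_pmf B d p)))"
proof -
  have sum_upd: "(\<Sum>j\<in>insert i B. g ((f(i := y)) j)) = g y + (\<Sum>j\<in>B. g (f j))" for f y
  proof -
    have "(\<Sum>j\<in>B. g ((f(i := y)) j)) = (\<Sum>j\<in>B. g (f j))"
      using assms by (intro sum.cong) auto
    then show ?thesis
      using assms by simp
  qed
  show ?thesis
    by (simp add: Pi_pmf_insert[OF assms] map_pmf_comp pair_map_pmf1 pair_map_pmf2
        sum_upd case_prod_beta del: fun_upd_apply)
qed

lemma map_sum_Pi_pmf:
  assumes "finite A"
  shows "map_pmf (\<lambda>f. \<Sum>j\<in>A. g (f j)) (Pi_pmf A d (\<lambda>_. R)) = iid_sum_pmf (map_pmf g R) (card A)"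
  using assms
  by (induction A rule: finite_induct) (simp_all add: map_sum_Pi_pmf_insert del: sum.insert)

lemma map_sum_Pi_pmf_one_different:
  assumes "finite A" "i \<in> A"
  shows "map_pmf (\<lambda>f. \<Sum>j\<in>A. g (f j)) (Pi_pmf A d (\<lambda>j. if j = i then P else Q))
       = map_pmf (\<lambda>(u, s). u + s) (pair_pmf (map_pmf g P) (iid_sum_pmf (map_pmf g Q) (card A - 1)))"
proof -
  define B where "B = A - {i}"
  have B: "A = insert i B" "finite B" "i \<notin> B" "card B = card A - 1"
    using assms by (auto simp: B_def)
  have "Pi_pmf B d (\<lambda>j. if j = i then P else Q) = Pi_pmf B d (\<lambda>_. Q)"
    using B by (intro Pi_pmf_cong) auto
  then have "map_pmf (\<lambda>f. \<Sum>j\<in>A. g (f j)) (Pi_pmf A d (\<lambda>j. if j = i then P else Q))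
      = map_pmf (\<lambda>(u, s). u + s) (pair_pmf (map_pmf g P)
          (map_pmf (\<lambda>f. \<Sum>j\<in>B. g (f j)) (Pi_pmf B d (\<lambda>_. Q))))"
    using map_sum_Pi_pmf_insert[OF B(2,3), of g d "\<lambda>j. if j = i then P else Q"]
    by (simp add: B(1)[symmetric])
  then show ?thesis
    using B(2) by (simp add: map_sum_Pi_pmf B(4))
qed

lemma pmf_prod_pmf:
  assumes "\<forall>j\<ge>t. \<omega> j = undefined"
  shows "pmf (prod_pmf t Q) \<omega> = (\<Prod>j<t. pmf Q (\<omega> j))"
  unfolding prod_pmf_def using assms by (intro pmf_Pi') auto

lemma pmf_alloc_pmf:
  assumes "t \<ge> 1" "\<forall>j\<ge>t. \<omega> j = undefined" "\<forall>j<t. pmf Q (\<omega> j) > 0"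
  shows "pmf (alloc_pmf t P Q) \<omega>
       = pmf (prod_pmf t Q) \<omega> * (\<Sum>i<t. pmf P (\<omega> i) / pmf Q (\<omega> i)) / real t"
proof -
  have slice: "pmf (Pi_pmf {..<t} undefined (\<lambda>j. if j = i then P else Q)) \<omega>
      = pmf (prod_pmf t Q) \<omega> * (pmf P (\<omega> i) / pmf Q (\<omega> i))" if "i < t" for i
  proof -
    have "pmf (Pi_pmf {..<t} undefined (\<lambda>j. if j = i then P else Q)) \<omega>
        = (\<Prod>j<t. pmf (if j = i then P else Q) (\<omega> j))"
      using assms(2) by (intro pmf_Pi') auto
    also have "\<dots> = (\<Prod>j<t. if j = i then pmf P (\<omega> j) else pmf Q (\<omega> j))"
      by (rule prod.cong) simp_all
    also have "\<dots> = pmf P (\<omega> i) * (\<Prod>j\<in>{..<t} - {i}. pmf Q (\<omega> j))"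
      using that by (simp add: prod.delta_remove)
    moreover have "pmf (prod_pmf t Q) \<omega> = pmf Q (\<omega> i) * (\<Prod>j\<in>{..<t} - {i}. pmf Q (\<omega> j))"
      using that by (simp add: pmf_prod_pmf[OF assms(2)] prod.remove[of "{..<t}" i])
    moreover have "pmf Q (\<omega> i) > 0"
      using that assms(3) by blast
    ultimately show ?thesis
      by simp
  qed
  have "pmf (alloc_pmf t P Q) \<omega>
      = (\<Sum>i<t. pmf (Pi_pmf {..<t} undefined (\<lambda>j. if j = i then P else Q)) \<omega>) / real t"
    using assms(1) by (simp add: alloc_pmf_def pmf_bind_pmf_of_set lessThan_empty_iff)
  also have "\<dots> = (\<Sum>i<t. pmf (prod_pmf t Q) \<omega> * (pmf P (\<omega> i) / pmf Q (\<omega> i))) / real t"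
    by (intro arg_cong[where f = "\<lambda>x. x / real t"] sum.cong) (simp_all add: slice)
  finally show ?thesis
    by (simp add: sum_distrib_left)
qed

lemma likelihood_ratio_alloc_prod:
  assumes "t \<ge> 1" "\<forall>j\<ge>t. \<omega> j = undefined"
  shows "likelihood_ratio (alloc_pmf t P Q) (prod_pmf t Q) \<omega>
       = ennreal (1 / real t) * (\<Sum>j<t. likelihood_ratio P Q (\<omega> j))"
proof (cases "\<exists>j<t. pmf Q (\<omega> j) = 0")
  case True
  then have "likelihood_ratio (alloc_pmf t P Q) (prod_pmf t Q) \<omega> = \<infinity>"
    using assms(2) by (auto simp: likelihood_ratio_def pmf_prod_pmf)
  moreover have "(\<Sum>j<t. likelihood_ratio P Q (\<omega> j)) = \<infinity>"
    using True by (auto simp: likelihood_ratio_def)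
  ultimately show ?thesis
    using assms(1) by (simp only:) (simp add: ennreal_mult_top)
next
  case False
  then have pos: "\<forall>j<t. pmf Q (\<omega> j) > 0"
    using pmf_nonneg[of Q] by (auto simp: less_le)
  then have "pmf (prod_pmf t Q) \<omega> > 0"
    unfolding pmf_prod_pmf[OF assms(2)] by (intro prod_pos) simp
  then have "likelihood_ratio (alloc_pmf t P Q) (prod_pmf t Q) \<omega>
      = ennreal ((\<Sum>j<t. pmf P (\<omega> j) / pmf Q (\<omega> j)) / real t)"
    using pmf_alloc_pmf[OF assms pos] by (simp add: likelihood_ratio_def)
  also have "\<dots> = ennreal (1 / real t) * (\<Sum>j<t. ennreal (pmf P (\<omega> j) / pmf Q (\<omega> j)))"
    by (simp add: ennreal_mult[symmetric] sum_nonneg)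
  also have "(\<Sum>j<t. ennreal (pmf P (\<omega> j) / pmf Q (\<omega> j))) = (\<Sum>j<t. likelihood_ratio P Q (\<omega> j))"
    using pos by (intro sum.cong) (auto simp: likelihood_ratio_def)
  finally show ?thesis .
qed

lemma psi_add_conv_iid_sum_pmf:
  "psi_add t L = map_pmf (\<lambda>s. - eln (ennreal (1 / real t) * s))
     (iid_sum_pmf (map_pmf (\<lambda>y. eexp (- y)) L) t)"
proof -
  have "psi_add t L = map_pmf (\<lambda>s. - eln (ennreal (1 / real t) * s))
      (map_pmf (\<lambda>f. \<Sum>i<t. eexp (- f i)) (prod_pmf t L))"
    by (simp add: psi_add_def map_pmf_comp)
  then show ?thesis
    by (simp add: prod_pmf_def map_sum_Pi_pmf[where g = "\<lambda>y. eexp (- y)"])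
qed

lemma psi_rem_conv_iid_sum_pmf:
  "psi_rem t L = map_pmf (\<lambda>(u, s). eln (ennreal (1 / real t) * (u + s)))
     (pair_pmf (map_pmf eexp L) (iid_sum_pmf (map_pmf (\<lambda>y. eexp (- y)) (pld_dual L)) (t - 1)))"
proof -
  have "psi_rem t L = map_pmf (\<lambda>(x, s). eln (ennreal (1 / real t) * (eexp x + s)))
      (pair_pmf L (map_pmf (\<lambda>f. \<Sum>i<t - 1. eexp (- f i)) (prod_pmf (t - 1) (pld_dual L))))"
    by (simp add: psi_rem_def pair_map_pmf2 map_pmf_comp split_beta')
  then show ?thesis
    by (simp add: prod_pmf_def map_sum_Pi_pmf[where g = "\<lambda>y. eexp (- y)"] pair_map_pmf1
        map_pmf_comp split_beta')
qed

lemma map_eexp_privacy_loss: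
  fixes P Q :: "'a pmf"
  shows "map_pmf eexp (privacy_loss P Q) = map_pmf (likelihood_ratio P Q) P"
  by (simp add: privacy_loss_conv_likelihood_ratio map_pmf_comp)

lemma map_eexp_uminus_privacy_loss_swap:
  fixes P Q :: "'a pmf"
  shows "map_pmf (\<lambda>y. eexp (- y)) (privacy_loss Q P) = map_pmf (likelihood_ratio P Q) Q"
  by (simp add: privacy_loss_swap_conv_likelihood_ratio map_pmf_comp)

lemma privacy_loss_alloc_prod:
  assumes "t \<ge> 1"
  shows "privacy_loss (alloc_pmf t P Q) (prod_pmf t Q)
       = map_pmf (\<lambda>(u, s). eln (ennreal (1 / real t) * (u + s)))
           (pair_pmf (map_pmf (likelihood_ratio P Q) P)
             (iid_sum_pmf (map_pmf (likelihood_ratio P Q) Q) (t - 1)))"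
    (is "_ = ?rhs")
proof -
  define F where "F = (\<lambda>s. eln (ennreal (1 / real t) * s))"
  define slice where "slice = (\<lambda>i. Pi_pmf {..<t} undefined (\<lambda>j. if j = i then P else Q))"
  have "privacy_loss (alloc_pmf t P Q) (prod_pmf t Q)
      = map_pmf (\<lambda>\<omega>. F (\<Sum>j<t. likelihood_ratio P Q (\<omega> j))) (alloc_pmf t P Q)"
    unfolding privacy_loss_conv_likelihood_ratio
  proof (rule map_pmf_cong[OF refl])
    fix \<omega> assume "\<omega> \<in> set_pmf (alloc_pmf t P Q)"
    then have ext: "\<forall>j\<ge>t. \<omega> j = undefined"
      using set_Pi_pmf_subset[OF finite_lessThan] by (fastforce simp: alloc_pmf_def)
    show "eln (likelihood_ratio (alloc_pmf t P Q) (prod_pmf t Q) \<omega>)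
        = F (\<Sum>j<t. likelihood_ratio P Q (\<omega> j))"
      using likelihood_ratio_alloc_prod[OF assms ext] by (simp add: F_def)
  qed
  also have "\<dots> = pmf_of_set {..<t} \<bind>
      (\<lambda>i. map_pmf F (map_pmf (\<lambda>\<omega>. \<Sum>j<t. likelihood_ratio P Q (\<omega> j)) (slice i)))"
    by (simp add: alloc_pmf_def slice_def map_bind_pmf map_pmf_comp)
  also have "\<dots> = pmf_of_set {..<t} \<bind> (\<lambda>_. ?rhs)"
  proof (intro bind_pmf_cong refl)
    fix i assume "i \<in> set_pmf (pmf_of_set {..<t})"
    then have "i \<in> {..<t}"
      using assms by (simp add: lessThan_empty_iff)
    then show "map_pmf F (map_pmf (\<lambda>\<omega>. \<Sum>j<t. likelihood_ratio P Q (\<omega> j)) (slice i)) = ?rhs"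
      by (simp add: slice_def F_def map_sum_Pi_pmf_one_different map_pmf_comp split_beta')
  qed
  finally show ?thesis
    by simp
qed

lemma privacy_loss_prod_alloc:
  assumes "t \<ge> 1"
  shows "privacy_loss (prod_pmf t Q) (alloc_pmf t P Q)
       = map_pmf (\<lambda>s. - eln (ennreal (1 / real t) * s))
           (iid_sum_pmf (map_pmf (likelihood_ratio P Q) Q) t)"
proof -
  have "privacy_loss (prod_pmf t Q) (alloc_pmf t P Q)
      = map_pmf (\<lambda>\<omega>. - eln (ennreal (1 / real t) * (\<Sum>j<t. likelihood_ratio P Q (\<omega> j))))
          (prod_pmf t Q)"
    unfolding privacy_loss_swap_conv_likelihood_ratio
  proof (rule map_pmf_cong[OF refl])
    fix \<omega> assume "\<omega> \<in> set_pmf (prod_pmf t Q)"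
    then have ext: "\<forall>j\<ge>t. \<omega> j = undefined"
      using set_Pi_pmf_subset[OF finite_lessThan] by (fastforce simp: prod_pmf_def)
    show "- eln (likelihood_ratio (alloc_pmf t P Q) (prod_pmf t Q) \<omega>)
        = - eln (ennreal (1 / real t) * (\<Sum>j<t. likelihood_ratio P Q (\<omega> j)))"
      using likelihood_ratio_alloc_prod[OF assms ext] by simp
  qed
  also have "\<dots> = map_pmf (\<lambda>s. - eln (ennreal (1 / real t) * s))
      (map_pmf (\<lambda>\<omega>. \<Sum>j<t. likelihood_ratio P Q (\<omega> j)) (prod_pmf t Q))"
    by (simp add: map_pmf_comp)
  finally show ?thesis
    by (simp add: prod_pmf_def map_sum_Pi_pmf[where g = "likelihood_ratio P Q"])
qed

theorem mainTheorem2: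
  fixes t :: nat and P Q :: "'a pmf"
  assumes "t \<ge> 1"
  shows "privacy_loss (alloc_pmf t P Q) (prod_pmf t Q) = psi_rem t (privacy_loss P Q)
       \<and> privacy_loss (prod_pmf t Q) (alloc_pmf t P Q) = psi_add t (privacy_loss Q P)"
proof
  show "privacy_loss (alloc_pmf t P Q) (prod_pmf t Q) = psi_rem t (privacy_loss P Q)"
    by (simp add: privacy_loss_alloc_prod[OF assms] psi_rem_conv_iid_sum_pmf
        pld_dual_privacy_loss map_eexp_privacy_loss map_eexp_uminus_privacy_loss_swap)
  show "privacy_loss (prod_pmf t Q) (alloc_pmf t P Q) = psi_add t (privacy_loss Q P)"
    by (simp add: privacy_loss_prod_alloc[OF assms] psi_add_conv_iid_sum_pmf
        map_eexp_uminus_privacy_loss_swap)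
qed

end
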